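(* Let $\{i,j,k\}=\{1,2,3\}$ and $n\ge0$. Then: 1. The atomic element $a^{ij}_n$ is $\varphi_i$-homomorphic and $\varphi_j$-homomorphic. 2. The atomic element $A^{ij}_n$ is $\varphi_i$-homomorphic. 3. The atomic element $A^{ij}_n$ is $(\varphi_j,y_k)$-homomorphic.
   Context: $D^{2,2,2}$ is the modular lattice generated by $x_1,y_1,x_2,y_2,x_3,y_3$ subject only to $x_i\subseteq y_i$ ($i=1,2,3$), with a greatest element $I$ adjoined. Meet is written $ab$, join $a+b$. Atomic elements: for distinct $i,j$, let $k$ denote the third index. Define - $a^{ij}_0=I$ and $a^{ij}_n=x_i+y_ja^{jk}_{n-1}$ for $n\ge1$; - $A^{ij}_0=I$ and $A^{ij}_n=y_i+x_jA^{ki}_{n-1}$ for $n\ge1$. A representation $\rho$ of $D^{2,2,2}$ in a finite-dimensional vector space $X_0$ is a lattice morphism from $D^{2,2,2}$ to the subspace lattice of $X_0$, with $\rho(I)=X_0$. Write $X_i=\rho(x_i)\subseteq Y_i=\rho(y_i)$. Put $R=Y_1\oplus Y_2\oplus Y_3$ and $X^1_0=\{(\eta_1,\eta_2,\eta_3)\in R:\sum\eta_i=0\}$. Let $G'_i\subseteq R$ be the triples with $i$-th coordinate in $X_i$, and $H'_i\subseteq R$ the triples with $i$-th coordinate $0$. $\Phi^+\rho$ is the representation in $X^1_0$ with $\Phi^+\rho(y_i)=G'_i\cap X^1_0$, $\Phi^+\rho(x_i)=H'_i\cap X^1_0$, $\Phi^+\rho(I)=X^1_0$. The elementary map $\varphi_i:X^1_0\to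 X_0$ is $(\eta_1,\eta_2,\eta_3)\mapsto\eta_i$; $\varphi_i(S)$ denotes the image of a subspace $S$. An element $a\in D^{2,2,2}$ is $\varphi_i$-homomorphic if, for every representation $\rho$ and every $p\in D^{2,2,2}$, $$\varphi_i(\Phi^+\rho(ap))=\varphi_i(\Phi^+\rho(a))\cap\varphi_i(\Phi^+\rho(p)).$$ An element $a$ is $(\varphi_i,y_k)$-homomorphic if, for every representation $\rho$ and every $p\in D^{2,2,2}$ with $p\subseteq y_k$, $$\varphi_i(\Phi^+\rho(ap))=\varphi_i(\Phi^+\rho(y_ka))\cap\varphi_i(\Phi^+\rho(p)).$$ *)

theory Defs
  imports Main "HOL.Vector_Spaces" "HOL-Library.Product_Plus"
begin

text \<open>Lattice terms over the generators x_i, y_i (i = 1,2,3) and the adjoined top I.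
  Meet ab is Meet a b, join a+b is Join a b.\<close>
datatype lterm = Gx nat | Gy nat | Top | Meet lterm lterm | Join lterm lterm

text \<open>Terms using only the generators with indices 1, 2, 3 (= elements of D^{2,2,2}).\<close>
fun wf_term :: "lterm \<Rightarrow> bool" where
  "wf_term (Gx i) = (i \<in> {1,2,3})"
| "wf_term (Gy i) = (i \<in> {1,2,3})"
| "wf_term Top = True"
| "wf_term (Meet p q) = (wf_term p \<and> wf_term q)"
| "wf_term (Join p q) = (wf_term p \<and> wf_term q)"

text \<open>The order of D^{2,2,2}: the least preorder on terms making the quotient a
  modular lattice with greatest element Top in which x_i \<le> y_i.
  Thus p \<le> q holds in D^{2,2,2} iff dleq p q.\<close>
inductive dleq :: "lterm \<Rightarrow> lterm \<Rightarrow> bool" where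
  refl: "dleq p p"
| trans: "dleq p q \<Longrightarrow> dleq q r \<Longrightarrow> dleq p r"
| meet_l: "dleq (Meet p q) p"
| meet_r: "dleq (Meet p q) q"
| meet_glb: "dleq r p \<Longrightarrow> dleq r q \<Longrightarrow> dleq r (Meet p q)"
| join_l: "dleq p (Join p q)"
| join_r: "dleq q (Join p q)"
| join_lub: "dleq p r \<Longrightarrow> dleq q r \<Longrightarrow> dleq (Join p q) r"
| top: "dleq p Top"
| gen: "i \<in> {1,2,3} \<Longrightarrow> dleq (Gx i) (Gy i)"
| modular: "dleq a c \<Longrightarrow> dleq (Meet (Join a b) c) (Join a (Meet b c))"

text \<open>Third index k of distinct i, j in {1,2,3}.\<close>
definition third :: "nat \<Rightarrow> nat \<Rightarrow> nat" where
  "third i j = 6 - i - j"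

fun atom_a :: "nat \<Rightarrow> nat \<Rightarrow> nat \<Rightarrow> lterm" where
  "atom_a i j 0 = Top"
| "atom_a i j (Suc n) = Join (Gx i) (Meet (Gy j) (atom_a j (third i j) n))"

fun atom_A :: "nat \<Rightarrow> nat \<Rightarrow> nat \<Rightarrow> lterm" where
  "atom_A i j 0 = Top"
| "atom_A i j (Suc n) = Join (Gy i) (Meet (Gx j) (atom_A (third i j) i n))"

definition ssum :: "'w::plus set \<Rightarrow> 'w set \<Rightarrow> 'w set" where
  "ssum A B = {u + v | u v. u \<in> A \<and> v \<in> B}"

fun eval :: "'w::plus set \<Rightarrow> (nat \<Rightarrow> 'w set) \<Rightarrow> (nat \<Rightarrow> 'w set) \<Rightarrow> lterm \<Rightarrow> 'w set" where
  "eval T X Y (Gx i) = X i"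
| "eval T X Y (Gy i) = Y i"
| "eval T X Y Top = T"
| "eval T X Y (Meet p q) = eval T X Y p \<inter> eval T X Y q"
| "eval T X Y (Join p q) = ssum (eval T X Y p) (eval T X Y q)"

text \<open>A representation of D^{2,2,2} in the finite-dimensional space UNIV :: 'v
  (over the field 'k with scalar multiplication scale, basis B).\<close>
definition is_rep :: "('k::field \<Rightarrow> 'v::ab_group_add \<Rightarrow> 'v) \<Rightarrow> 'v set
     \<Rightarrow> (nat \<Rightarrow> 'v set) \<Rightarrow> (nat \<Rightarrow> 'v set) \<Rightarrow> bool" where
  "is_rep scale B X Y \<longleftrightarrow> finite_dimensional_vector_space scale B \<and>
     (\<forall>i\<in>{1,2,3}. module.subspace scale (X i) \<and> module.subspace scale (Y i) \<and> X i \<subseteq> Y i)"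

text \<open>The i-th coordinate of a triple (the elementary map phi_i).\<close>
definition coord :: "nat \<Rightarrow> 'v \<times> 'v \<times> 'v \<Rightarrow> 'v" where
  "coord i t = (if i = 1 then fst t else if i = 2 then fst (snd t) else snd (snd t))"

definition X01 :: "(nat \<Rightarrow> 'v::ab_group_add set) \<Rightarrow> ('v \<times> 'v \<times> 'v) set" where
  "X01 Y = {t. (\<forall>i\<in>{1,2,3}. coord i t \<in> Y i) \<and> fst t + fst (snd t) + snd (snd t) = 0}"

definition phiY :: "(nat \<Rightarrow> 'v::ab_group_add set) \<Rightarrow> (nat \<Rightarrow> 'v set) \<Rightarrow> nat \<Rightarrow> ('v \<times> 'v \<times> 'v) set" where
  "phiY X Y i = {t \<in> X01 Y. coord i t \<in> X i}"

definition phiX :: "(nat \<Rightarrow> 'v::ab_group_add set) \<Rightarrow> nat \<Rightarrow> ('v \<times> 'v \<times> 'v) set" where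
  "phiX Y i = {t \<in> X01 Y. coord i t = 0}"

definition PhiP :: "(nat \<Rightarrow> 'v::ab_group_add set) \<Rightarrow> (nat \<Rightarrow> 'v set) \<Rightarrow> lterm \<Rightarrow> ('v \<times> 'v \<times> 'v) set" where
  "PhiP X Y p = eval (X01 Y) (phiX Y) (phiY X Y) p"

end

theory Submission
  imports Defs
begin

text \<open>Only the additive group structure matters: \<open>\<Phi>\<^sup>+\<rho>\<close> evaluates every term to an
  additive subgroup of \<open>X\<^sup>1\<^sub>0\<close>, monotonically in the order of D^{2,2,2}, and the kernel of
  \<open>\<phi>\<^sub>l\<close> on \<open>X\<^sup>1\<^sub>0\<close> is \<open>\<Phi>\<^sup>+\<rho>(x\<^sub>l)\<close>. If the kernel of an additive map on a group \<open>T\<close> lies in a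
  subgroup \<open>A \<subseteq> T\<close>, the map commutes with intersecting \<open>A\<close> with any \<open>P \<subseteq> T\<close>. Hence \<open>a\<close> is
  \<open>\<phi>\<^sub>l\<close>-homomorphic as soon as \<open>x\<^sub>l \<le> a\<close>, and \<open>(\<phi>\<^sub>j,y\<^sub>k)\<close>-homomorphic as soon as
  \<open>x\<^sub>j y\<^sub>k \<le> a\<close> (take \<open>T = \<Phi>\<^sup>+\<rho>(y\<^sub>k)\<close>). These inequalities hold for the atomic elements by
  unfolding one step of their recursion.\<close>

definition additive_subgroup :: "'a::ab_group_add set \<Rightarrow> bool" where
  "additive_subgroup S \<longleftrightarrow> 0 \<in> S \<and> (\<forall>a\<in>S. \<forall>b\<in>S. a - b \<in> S)"

lemma additive_subgroup_zero: "additive_subgroup S \<Longrightarrow> 0 \<in> S"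
  unfolding additive_subgroup_def by blast

lemma additive_subgroup_diff: "additive_subgroup S \<Longrightarrow> a \<in> S \<Longrightarrow> b \<in> S \<Longrightarrow> a - b \<in> S"
  unfolding additive_subgroup_def by blast

lemma additive_subgroup_add:
  assumes "additive_subgroup S" "a \<in> S" "b \<in> S"
  shows "a + b \<in> S"
proof -
  have "a - (0 - b) \<in> S"
    using assms by (blast intro: additive_subgroup_diff additive_subgroup_zero)
  then show ?thesis by simp
qed

lemma additive_subgroup_Int:
  "additive_subgroup A \<Longrightarrow> additive_subgroup B \<Longrightarrow> additive_subgroup (A \<inter> B)"
  unfolding additive_subgroup_def by blast

lemma additive_subgroup_zero_set: "additive_subgroup {0}"
  by (simp add: additive_subgroup_def)

lemma additive_subgroup_vimage:
  fixes f :: "'a::ab_group_add \<Rightarrow> 'b::ab_group_add"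
  assumes "\<And>a b. f (a - b) = f a - f b" and "additive_subgroup S"
  shows "additive_subgroup (f -` S)"
proof -
  have "f 0 = 0" using assms(1)[of 0 0] by simp
  then show ?thesis using assms unfolding additive_subgroup_def by auto
qed

lemma additive_subgroup_ssum:
  assumes A: "additive_subgroup A" and B: "additive_subgroup B"
  shows "additive_subgroup (ssum A B)"
  unfolding additive_subgroup_def
proof (intro conjI ballI)
  show "0 \<in> ssum A B"
    unfolding ssum_def using A B additive_subgroup_zero by force
  fix x y assume "x \<in> ssum A B" "y \<in> ssum A B"
  then obtain u v u' v' where "x = u + v" "y = u' + v'" "u \<in> A" "v \<in> B" "u' \<in> A" "v' \<in> B"
    unfolding ssum_def by blast
  moreover have "x - y = (u - u') + (v - v')"
    using calculation by (simp add: algebra_simps)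
  ultimately show "x - y \<in> ssum A B"
    unfolding ssum_def using A B additive_subgroup_diff by blast
qed

lemma ssum_subset: "additive_subgroup T \<Longrightarrow> A \<subseteq> T \<Longrightarrow> B \<subseteq> T \<Longrightarrow> ssum A B \<subseteq> T"
  unfolding ssum_def using additive_subgroup_add by blast

lemma ssum_upper_left:
  fixes A B :: "'a::monoid_add set"
  assumes "0 \<in> B"
  shows "A \<subseteq> ssum A B"
proof
  fix a assume "a \<in> A"
  then have "a + 0 \<in> ssum A B" unfolding ssum_def using assms by blast
  then show "a \<in> ssum A B" by simp
qed

lemma ssum_upper_right:
  fixes A B :: "'a::monoid_add set"
  assumes "0 \<in> A"
  shows "B \<subseteq> ssum A B"
proof
  fix b assume "b \<in> B"
  then have "0 + b \<in> ssum A B" unfolding ssum_def using assms by blast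
  then show "b \<in> ssum A B" by simp
qed

lemma ssum_modular:
  assumes "additive_subgroup C" "A \<subseteq> C"
  shows "ssum A B \<inter> C \<subseteq> ssum A (B \<inter> C)"
proof
  fix x assume "x \<in> ssum A B \<inter> C"
  then obtain u v where "x = u + v" "u \<in> A" "v \<in> B" "x \<in> C"
    unfolding ssum_def by blast
  moreover have "v = x - u" using \<open>x = u + v\<close> by simp
  ultimately have "v \<in> C" using assms additive_subgroup_diff by (metis subsetD)
  then show "x \<in> ssum A (B \<inter> C)"
    unfolding ssum_def using \<open>x = u + v\<close> \<open>u \<in> A\<close> \<open>v \<in> B\<close> by blast
qed

lemma additive_image_Int:
  fixes f :: "'a::ab_group_add \<Rightarrow> 'b::ab_group_add"
  assumes f_diff: "\<And>a b. f (a - b) = f a - f b"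
    and T: "additive_subgroup T" and A: "additive_subgroup A" "A \<subseteq> T" and P: "P \<subseteq> T"
    and kernel: "{t \<in> T. f t = 0} \<subseteq> A"
  shows "f ` (A \<inter> P) = f ` A \<inter> f ` P"
proof
  show "f ` A \<inter> f ` P \<subseteq> f ` (A \<inter> P)"
  proof
    fix v assume "v \<in> f ` A \<inter> f ` P"
    then obtain a b where a: "a \<in> A" and b: "b \<in> P" and "v = f a" "v = f b" by blast
    have "b - a \<in> T" using A P a b additive_subgroup_diff[OF T] by blast
    moreover have "f (b - a) = 0" using f_diff \<open>v = f a\<close> \<open>v = f b\<close> by simp
    ultimately have "b - a \<in> A" using kernel by blast
    then have "b \<in> A"
      using additive_subgroup_add[OF A(1) a] by force
    with b \<open>v = f b\<close> show "v \<in> f ` (A \<inter> P)" by blast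
  qed
qed blast

definition subgroup_rep :: "'w::ab_group_add set \<Rightarrow> (nat \<Rightarrow> 'w set) \<Rightarrow> (nat \<Rightarrow> 'w set) \<Rightarrow> bool" where
  "subgroup_rep T X Y \<longleftrightarrow> additive_subgroup T \<and>
     (\<forall>i\<in>{1,2,3}. additive_subgroup (X i) \<and> additive_subgroup (Y i) \<and> X i \<subseteq> Y i \<and> Y i \<subseteq> T)"

lemma eval_additive_subgroup:
  assumes T: "additive_subgroup T"
    and "\<And>i. additive_subgroup (X i) \<and> X i \<subseteq> T" "\<And>i. additive_subgroup (Y i) \<and> Y i \<subseteq> T"
  shows "additive_subgroup (eval T X Y p) \<and> eval T X Y p \<subseteq> T"
proof (induction p)
  case (Meet p q)
  then show ?case using additive_subgroup_Int by auto
next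
  case (Join p q)
  then show ?case by (simp add: additive_subgroup_ssum ssum_subset[OF T])
qed (use assms in auto)

lemma eval_mono:
  assumes "dleq p q" and T: "additive_subgroup T"
    and "\<And>i. additive_subgroup (X i) \<and> X i \<subseteq> T" "\<And>i. additive_subgroup (Y i) \<and> Y i \<subseteq> T"
    and XY: "\<And>i. i \<in> {1,2,3} \<Longrightarrow> X i \<subseteq> Y i"
  shows "eval T X Y p \<subseteq> eval T X Y q"
proof -
  have sub: "additive_subgroup (eval T X Y r) \<and> eval T X Y r \<subseteq> T" for r
    by (rule eval_additive_subgroup) (use assms in auto)
  show ?thesis
    using assms(1)
  proof (induction rule: dleq.induct)
    case (join_l p q)
    show ?case by (simp add: ssum_upper_left additive_subgroup_zero sub)
  next
    case (join_r q p)
    show ?case by (simp add: ssum_upper_right additive_subgroup_zero sub)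
  next
    case (join_lub p r q)
    then show ?case by (simp add: ssum_subset sub)
  next
    case (modular a c b)
    then show ?case by (simp add: ssum_modular sub)
  qed (use XY sub in auto)
qed

text \<open>A derivation of \<open>dleq p q\<close> may pass through terms with generator indices outside
  \<open>{1,2,3}\<close>; replacing those generators by \<open>{0}\<close> changes no well-formed term.\<close>

definition pad_generators :: "(nat \<Rightarrow> 'w::zero set) \<Rightarrow> nat \<Rightarrow> 'w set" where
  "pad_generators X i = (if i \<in> {1,2,3} then X i else {0})"

lemma eval_pad_generators:
  "wf_term p \<Longrightarrow> eval T (pad_generators X) (pad_generators Y) p = eval T X Y p"
  by (induction p) (auto simp: pad_generators_def)

lemma subgroup_rep_pad_generators:
  assumes "subgroup_rep T X Y"
  shows "additive_subgroup (pad_generators X i) \<and> pad_generators X i \<subseteq> T"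
    "additive_subgroup (pad_generators Y i) \<and> pad_generators Y i \<subseteq> T"
    "i \<in> {1,2,3} \<Longrightarrow> pad_generators X i \<subseteq> pad_generators Y i"
  using assms by (auto simp: pad_generators_def subgroup_rep_def additive_subgroup_def)

lemma subgroup_rep_eval:
  assumes rep: "subgroup_rep T X Y" and "wf_term p"
  shows "additive_subgroup (eval T X Y p) \<and> eval T X Y p \<subseteq> T"
proof -
  have "additive_subgroup (eval T (pad_generators X) (pad_generators Y) p) \<and>
      eval T (pad_generators X) (pad_generators Y) p \<subseteq> T"
    by (rule eval_additive_subgroup)
      (use rep subgroup_rep_pad_generators[OF rep] in \<open>auto simp: subgroup_rep_def\<close>)
  then show ?thesis by (simp only: eval_pad_generators[OF \<open>wf_term p\<close>])
qed

lemma subgroup_rep_eval_mono: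
  assumes rep: "subgroup_rep T X Y" and "dleq p q" "wf_term p" "wf_term q"
  shows "eval T X Y p \<subseteq> eval T X Y q"
proof -
  have "eval T (pad_generators X) (pad_generators Y) p \<subseteq> eval T (pad_generators X) (pad_generators Y) q"
    by (rule eval_mono[OF \<open>dleq p q\<close>])
      (use rep subgroup_rep_pad_generators[OF rep] in \<open>auto simp: subgroup_rep_def\<close>)
  then show ?thesis by (simp only: eval_pad_generators \<open>wf_term p\<close> \<open>wf_term q\<close>)
qed

lemma coord_diff: "coord i (a - b) = coord i a - coord i (b :: 'v::ab_group_add \<times> 'v \<times> 'v)"
  unfolding coord_def by auto

lemma additive_subgroup_X01:
  assumes "\<forall>i\<in>{1,2,3}. additive_subgroup (Y i)"
  shows "additive_subgroup (X01 Y)"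
  unfolding additive_subgroup_def
proof (intro conjI ballI)
  show "0 \<in> X01 Y"
    using assms additive_subgroup_zero unfolding X01_def coord_def by fastforce
  fix a b assume a: "a \<in> X01 Y" and b: "b \<in> X01 Y"
  have "fst (a - b) + fst (snd (a - b)) + snd (snd (a - b)) =
      (fst a + fst (snd a) + snd (snd a)) - (fst b + fst (snd b) + snd (snd b))"
    by (simp add: algebra_simps)
  also have "\<dots> = 0" using a b unfolding X01_def by simp
  moreover have "coord l (a - b) \<in> Y l" if "l \<in> {1,2,3}" for l
    using a b assms that additive_subgroup_diff unfolding X01_def coord_diff by auto
  ultimately show "a - b \<in> X01 Y"
    unfolding X01_def by simp
qed

lemma subgroup_rep_PhiP:
  assumes "\<forall>i\<in>{1,2,3}. additive_subgroup (X i) \<and> additive_subgroup (Y i)"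
  shows "subgroup_rep (X01 Y) (phiX Y) (phiY X Y)"
  unfolding subgroup_rep_def
proof (intro conjI ballI)
  show T: "additive_subgroup (X01 Y)" by (rule additive_subgroup_X01) (use assms in blast)
  fix i :: nat assume "i \<in> {1,2,3}"
  then have Xi: "additive_subgroup (X i)" using assms by blast
  have "phiX Y i = X01 Y \<inter> coord i -` {0}" by (auto simp: phiX_def)
  then show "additive_subgroup (phiX Y i)"
    using additive_subgroup_Int[OF T additive_subgroup_vimage[OF coord_diff[of i] additive_subgroup_zero_set]]
    by simp
  have "phiY X Y i = X01 Y \<inter> coord i -` X i" by (auto simp: phiY_def)
  then show "additive_subgroup (phiY X Y i)"
    using additive_subgroup_Int[OF T additive_subgroup_vimage[OF coord_diff[of i] Xi]] by simp
  show "phiX Y i \<subseteq> phiY X Y i"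
    using additive_subgroup_zero[OF Xi] by (auto simp: phiX_def phiY_def)
  show "phiY X Y i \<subseteq> X01 Y"
    by (auto simp: phiY_def)
qed

lemma PhiP_Meet: "PhiP X Y (Meet p q) = PhiP X Y p \<inter> PhiP X Y q"
  by (simp add: PhiP_def)

lemma PhiP_additive_subgroup:
  assumes "\<forall>i\<in>{1,2,3}. additive_subgroup (X i) \<and> additive_subgroup (Y i)" "wf_term p"
  shows "additive_subgroup (PhiP X Y p) \<and> PhiP X Y p \<subseteq> X01 Y"
  unfolding PhiP_def by (rule subgroup_rep_eval[OF subgroup_rep_PhiP[OF assms(1)] assms(2)])

lemma PhiP_mono:
  assumes "\<forall>i\<in>{1,2,3}. additive_subgroup (X i) \<and> additive_subgroup (Y i)"
    and "dleq p q" "wf_term p" "wf_term q"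
  shows "PhiP X Y p \<subseteq> PhiP X Y q"
  unfolding PhiP_def by (rule subgroup_rep_eval_mono[OF subgroup_rep_PhiP[OF assms(1)] assms(2-4)])

lemma is_rep_additive_subgroups:
  assumes "is_rep scale B X Y"
  shows "\<forall>i\<in>{1,2,3}. additive_subgroup (X i) \<and> additive_subgroup (Y i)"
proof -
  have "module scale" using assms
    by (simp add: is_rep_def finite_dimensional_vector_space_def vector_space_def module_def)
  then show ?thesis
    using assms unfolding is_rep_def additive_subgroup_def
    by (meson module.subspace_0 module.subspace_diff)
qed

definition coord_homomorphic :: "(nat \<Rightarrow> 'v::ab_group_add set) \<Rightarrow> (nat \<Rightarrow> 'v set) \<Rightarrow> nat \<Rightarrow> lterm \<Rightarrow> bool" where
  "coord_homomorphic X Y i a \<longleftrightarrow> (\<forall>p. wf_term p \<longrightarrow>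
     coord i ` PhiP X Y (Meet a p) = coord i ` PhiP X Y a \<inter> coord i ` PhiP X Y p)"

definition coord_homomorphic_below :: "(nat \<Rightarrow> 'v::ab_group_add set) \<Rightarrow> (nat \<Rightarrow> 'v set) \<Rightarrow> nat \<Rightarrow> nat \<Rightarrow> lterm \<Rightarrow> bool" where
  "coord_homomorphic_below X Y i k a \<longleftrightarrow> (\<forall>p. wf_term p \<and> dleq p (Gy k) \<longrightarrow>
     coord i ` PhiP X Y (Meet a p) = coord i ` PhiP X Y (Meet (Gy k) a) \<inter> coord i ` PhiP X Y p)"

lemma coord_homomorphic_if_Gx_le:
  assumes groups: "\<forall>i\<in>{1,2,3}. additive_subgroup (X i) \<and> additive_subgroup (Y i)"
    and l: "l \<in> {1,2,3}" and a: "wf_term a" and le: "dleq (Gx l) a"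
  shows "coord_homomorphic X Y l a"
  unfolding coord_homomorphic_def PhiP_Meet
proof (intro allI impI)
  fix p assume p: "wf_term p"
  have "{t \<in> X01 Y. coord l t = 0} = PhiP X Y (Gx l)" by (simp add: PhiP_def phiX_def)
  also have "\<dots> \<subseteq> PhiP X Y a" using PhiP_mono[OF groups le] l a by simp
  finally show "coord l ` (PhiP X Y a \<inter> PhiP X Y p) = coord l ` PhiP X Y a \<inter> coord l ` PhiP X Y p"
    by (rule additive_image_Int[OF coord_diff[of l], rotated -1])
      (use groups additive_subgroup_X01 PhiP_additive_subgroup[OF groups] a p in auto)
qed

lemma coord_homomorphic_below_if_Gx_Gy_le:
  assumes groups: "\<forall>i\<in>{1,2,3}. additive_subgroup (X i) \<and> additive_subgroup (Y i)"
    and jk: "j \<in> {1,2,3}" "k \<in> {1,2,3}" and a: "wf_term a" and le: "dleq (Meet (Gx j) (Gy k)) a"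
  shows "coord_homomorphic_below X Y j k a"
  unfolding coord_homomorphic_below_def
proof (intro allI impI, elim conjE)
  fix p assume p: "wf_term p" and p_le: "dleq p (Gy k)"
  let ?Yk = "PhiP X Y (Gy k)" and ?A = "PhiP X Y (Meet (Gy k) a)"
  have Yk: "additive_subgroup ?Yk" "?Yk \<subseteq> X01 Y"
    using PhiP_additive_subgroup[OF groups] jk by auto
  have A: "additive_subgroup ?A" "?A \<subseteq> ?Yk"
    using PhiP_additive_subgroup[OF groups] jk a by (auto simp: PhiP_Meet additive_subgroup_Int)
  have p_sub: "PhiP X Y p \<subseteq> ?Yk"
    using PhiP_mono[OF groups p_le p] jk by simp
  have "{t \<in> ?Yk. coord j t = 0} = PhiP X Y (Meet (Gx j) (Gy k))"
    using Yk(2) by (auto simp: PhiP_def phiX_def)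
  also have "\<dots> \<subseteq> ?A"
    using PhiP_mono[OF groups dleq.meet_glb[OF dleq.meet_r le]] jk a by simp
  finally have "coord j ` (?A \<inter> PhiP X Y p) = coord j ` ?A \<inter> coord j ` PhiP X Y p"
    by (rule additive_image_Int[OF coord_diff[of j] Yk(1) A p_sub])
  moreover have "PhiP X Y (Meet a p) = ?A \<inter> PhiP X Y p"
    using p_sub by (auto simp: PhiP_Meet)
  ultimately show "coord j ` PhiP X Y (Meet a p) = coord j ` ?A \<inter> coord j ` PhiP X Y p"
    by simp
qed

lemma third_mem_distinct:
  assumes "i \<in> {1,2,3::nat}" "j \<in> {1,2,3}" "i \<noteq> j"
  shows "third i j \<in> {1,2,3}" "third i j \<noteq> i" "third i j \<noteq> j"
  using assms unfolding third_def by auto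

lemma third_if_permutation:
  assumes "{i, j, k} = {1, 2, 3::nat}"
  shows "i \<in> {1,2,3}" "j \<in> {1,2,3}" "i \<noteq> j" "k = third i j"
proof -
  have range: "i \<in> {1,2,3}" "j \<in> {1,2,3}" "k \<in> {1,2,3}" using assms by blast+
  then show "i \<in> {1,2,3}" "j \<in> {1,2,3}" by simp_all
  have "1 \<in> {i,j,k}" "2 \<in> {i,j,k}" "3 \<in> {i,j,k}" using assms by simp_all
  then have "i = 1 \<or> j = 1 \<or> k = 1" "i = 2 \<or> j = 2 \<or> k = 2" "i = 3 \<or> j = 3 \<or> k = 3" by auto
  moreover have "1 \<le> i" "i \<le> 3" "1 \<le> j" "j \<le> 3" "1 \<le> k" "k \<le> 3" using range by auto
  ultimately show "i \<noteq> j" "k = third i j" unfolding third_def by presburger+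
qed

lemma wf_atom_a: "i \<in> {1,2,3} \<Longrightarrow> j \<in> {1,2,3} \<Longrightarrow> i \<noteq> j \<Longrightarrow> wf_term (atom_a i j n)"
proof (induction n arbitrary: i j)
  case (Suc n)
  then show ?case using third_mem_distinct[of i j] by auto
qed simp

lemma wf_atom_A: "i \<in> {1,2,3} \<Longrightarrow> j \<in> {1,2,3} \<Longrightarrow> i \<noteq> j \<Longrightarrow> wf_term (atom_A i j n)"
proof (induction n arbitrary: i j)
  case (Suc n)
  then show ?case using third_mem_distinct[of i j] by auto
qed simp

lemma Gx_le_atom_a: "dleq (Gx i) (atom_a i j n)"
  by (cases n) (simp_all add: dleq.top dleq.join_l)

lemma Gx_le_atom_a_second:
  assumes "j \<in> {1,2,3}"
  shows "dleq (Gx j) (atom_a i j n)"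
proof (cases n)
  case (Suc m)
  have "dleq (Gx j) (Meet (Gy j) (atom_a j (third i j) m))"
    by (rule dleq.meet_glb[OF dleq.gen[OF assms] Gx_le_atom_a])
  then show ?thesis unfolding Suc atom_a.simps by (rule dleq.trans[OF _ dleq.join_r])
qed (simp add: dleq.top)

lemma Gy_le_atom_A: "dleq (Gy i) (atom_A i j n)"
  by (cases n) (simp_all add: dleq.top dleq.join_l)

lemma Gx_le_atom_A: "i \<in> {1,2,3} \<Longrightarrow> dleq (Gx i) (atom_A i j n)"
  by (rule dleq.trans[OF dleq.gen Gy_le_atom_A])

lemma Gx_Gy_le_atom_A: "dleq (Meet (Gx j) (Gy (third i j))) (atom_A i j n)"
proof (cases n)
  case (Suc m)
  have "dleq (Meet (Gx j) (Gy (third i j))) (Meet (Gx j) (atom_A (third i j) i m))"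
    by (rule dleq.meet_glb[OF dleq.meet_l dleq.trans[OF dleq.meet_r Gy_le_atom_A]])
  then show ?thesis unfolding Suc atom_A.simps by (rule dleq.trans[OF _ dleq.join_r])
qed (simp add: dleq.top)

theorem mainTheorem11:
  fixes scale :: "'k::field \<Rightarrow> 'v::ab_group_add \<Rightarrow> 'v"
    and B :: "'v set" and X Y :: "nat \<Rightarrow> 'v set"
    and i j k n :: nat
  assumes ijk: "{i, j, k} = {1, 2, 3}"
    and rep: "is_rep scale B X Y"
  shows "(\<forall>p. wf_term p \<longrightarrow> coord i ` PhiP X Y (Meet (atom_a i j n) p)
              = coord i ` PhiP X Y (atom_a i j n) \<inter> coord i ` PhiP X Y p) \<and>
        (\<forall>p. wf_term p \<longrightarrow> coord j ` PhiP X Y (Meet (atom_a i j n) p)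
              = coord j ` PhiP X Y (atom_a i j n) \<inter> coord j ` PhiP X Y p) \<and>
        (\<forall>p. wf_term p \<longrightarrow> coord i ` PhiP X Y (Meet (atom_A i j n) p)
              = coord i ` PhiP X Y (atom_A i j n) \<inter> coord i ` PhiP X Y p) \<and>
        (\<forall>p. wf_term p \<and> dleq p (Gy k) \<longrightarrow>
           coord j ` PhiP X Y (Meet (atom_A i j n) p)
              = coord j ` PhiP X Y (Meet (Gy k) (atom_A i j n)) \<inter> coord j ` PhiP X Y p)"
proof -
  note idx = third_if_permutation[OF ijk]
  have k: "k \<in> {1,2,3}" using third_mem_distinct(1)[OF idx(1-3)] idx(4) by simp
  have groups: "\<forall>l\<in>{1,2,3}. additive_subgroup (X l) \<and> additive_subgroup (Y l)"
    by (rule is_rep_additive_subgroups[OF rep])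
  note wf = wf_atom_a[OF idx(1-3)] wf_atom_A[OF idx(1-3)]
  have "coord_homomorphic X Y i (atom_a i j n)"
    by (rule coord_homomorphic_if_Gx_le[OF groups idx(1) wf(1) Gx_le_atom_a])
  moreover have "coord_homomorphic X Y j (atom_a i j n)"
    by (rule coord_homomorphic_if_Gx_le[OF groups idx(2) wf(1) Gx_le_atom_a_second[OF idx(2)]])
  moreover have "coord_homomorphic X Y i (atom_A i j n)"
    by (rule coord_homomorphic_if_Gx_le[OF groups idx(1) wf(2) Gx_le_atom_A[OF idx(1)]])
  moreover have "coord_homomorphic_below X Y j k (atom_A i j n)"
    by (rule coord_homomorphic_below_if_Gx_Gy_le[OF groups idx(2) k wf(2)])
      (use Gx_Gy_le_atom_A idx(4) in simp)
  ultimately show ?thesis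
    unfolding coord_homomorphic_def coord_homomorphic_below_def by blast
qed

end
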